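(* Let $n \geq 9$ and $P \in \mathrm{PLS}(2,3;n)$. Then $P$ has a proper reduction (i.e. $P$ is reducible) if and only if $P$ is not completely reduced.
   Context: $\mathrm{PLS}(2,3;n)$ denotes the set of $n\times n$ partial Latin squares on symbols $\{1,\dots,n\}$ (each cell empty or containing one symbol, no symbol repeated in a row or column) in which rows $1,2$ and columns $1,2,3$ are completely filled and all other cells are empty. Write $R_i$ for row $i$ and $C_j$ for column $j$ of $P$. Compositions: for columns $C_j, C_k$ and $l\le 2$, $C_j \circ_l C_k$ is the column identical to $C_j$ except that its entry in row $l$ is $P(l,k)$. For rows $R_j,R_i$ and $l \le 3$, $R_j \circ_l R_i$ is the row identical to $R_j$ except that its entry in column $l$ is $P(i,l)$. An array line is called Latin if it contains no repeated symbol. Replacement: let $\alpha$ be a symbol not occurring in the $2\times 3$ subarray in the upper left corner of $P$, and let $j,k,l,q,r$ be such that $P(j,1)=P(k,2)=P(l,3)=P(1,q)=P(2,r)=\alpha$. A row $R_i$ with $i \in \{3,\dots,n\}$ replaces $\alpha$ if $R_j\circ_1 R_i$, $R_k \circ_2 R_i$ and $R_l \circ_3 R_i$ are all Latin. A column $C_p$ with $p\in\{4,\dots,n\}$ replaces $\alpha$ if $C_q \circ_1 C_p$ and $C_r \circ_2 C_p$ are both Latin; $C_p$ replaces itself if moreover $p \in \{q,r\}$. $P$ is reducible (has a proper reduction) if there exist such a symbol $\alpha$, a row replacing $\alpha$, and a column replacing $\alpha$ and itself. Cycle types: the $(1,2)$-row-permutation of $P$ is the permutation $\sigma$ of $\{1,\dots,n\}$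 with $\sigma(P(1,i))=P(2,i)$ for all $i$. For a cycle $(a_1\,a_2\,\dots\,a_m)$ in the disjoint cycle representation of $\sigma$, its cycle type is the $0/1$ sequence of length $m$ whose $i$th entry is $1$ if $a_i \in \{P(1,1),P(1,2),P(1,3)\}$ and $0$ otherwise. Two sequences are equivalent if one is obtained from the other by a cyclic permutation. $P$ is completely reduced if the cycle type of every cycle of $\sigma$ is equivalent to one of: $00$, $01$, $11$, $101$, $111$, $1010$, $1110$, $10101$, $101010$. *)

theory Defs
  imports Main
begin

text \<open>An n x n partial array: P i j is the content of cell (i,j), indices 1..n;
  None = empty cell. Symbols are 1..n.\<close>
type_synonym parr = "nat \<Rightarrow> nat \<Rightarrow> nat option"

definition latin_line :: "nat \<Rightarrow> (nat \<Rightarrow> nat option) \<Rightarrow> bool" where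
  "latin_line n f \<longleftrightarrow>
     (\<forall>a\<in>{1..n}. \<forall>b\<in>{1..n}. a \<noteq> b \<longrightarrow> f a \<noteq> None \<longrightarrow> f a \<noteq> f b)"

definition row :: "parr \<Rightarrow> nat \<Rightarrow> (nat \<Rightarrow> nat option)" where
  "row P i = (\<lambda>j. P i j)"

definition col :: "parr \<Rightarrow> nat \<Rightarrow> (nat \<Rightarrow> nat option)" where
  "col P j = (\<lambda>i. P i j)"

definition PLS23 :: "nat \<Rightarrow> parr set" where
  "PLS23 n = {P.
     (\<forall>i j. P i j \<noteq> None \<longrightarrow> i \<in> {1..n} \<and> j \<in> {1..n}) \<and>
     (\<forall>i\<in>{1..n}. \<forall>j\<in>{1..n}. (P i j \<noteq> None \<longleftrightarrow> (i \<le> 2 \<or> j \<le> 3))) \<and>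
     (\<forall>i j s. P i j = Some s \<longrightarrow> s \<in> {1..n}) \<and>
     (\<forall>i\<in>{1..n}. latin_line n (row P i)) \<and>
     (\<forall>j\<in>{1..n}. latin_line n (col P j))}"

text \<open>C_j o_l C_k : column j with its entry in row l replaced by P(l,k).\<close>
definition col_comp :: "parr \<Rightarrow> nat \<Rightarrow> nat \<Rightarrow> nat \<Rightarrow> (nat \<Rightarrow> nat option)" where
  "col_comp P j l k = (col P j)(l := P l k)"

text \<open>R_j o_l R_i : row j with its entry in column l replaced by P(i,l).\<close>
definition row_comp :: "parr \<Rightarrow> nat \<Rightarrow> nat \<Rightarrow> nat \<Rightarrow> (nat \<Rightarrow> nat option)" where
  "row_comp P j l i = (row P j)(l := P i l)"

definition not_in_corner :: "parr \<Rightarrow> nat \<Rightarrow> bool" where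
  "not_in_corner P \<alpha> \<longleftrightarrow> (\<forall>i\<in>{1,2}. \<forall>j\<in>{1,2,3}. P i j \<noteq> Some \<alpha>)"

definition row_replaces :: "nat \<Rightarrow> parr \<Rightarrow> nat \<Rightarrow> nat \<Rightarrow> bool" where
  "row_replaces n P \<alpha> i \<longleftrightarrow> i \<in> {3..n} \<and>
     (\<exists>j\<in>{1..n}. \<exists>k\<in>{1..n}. \<exists>l\<in>{1..n}.
        P j 1 = Some \<alpha> \<and> P k 2 = Some \<alpha> \<and> P l 3 = Some \<alpha> \<and>
        latin_line n (row_comp P j 1 i) \<and> latin_line n (row_comp P k 2 i) \<and>
        latin_line n (row_comp P l 3 i))"

definition col_replaces :: "nat \<Rightarrow> parr \<Rightarrow> nat \<Rightarrow> nat \<Rightarrow> bool" where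
  "col_replaces n P \<alpha> p \<longleftrightarrow> p \<in> {4..n} \<and>
     (\<exists>q\<in>{1..n}. \<exists>r\<in>{1..n}. P 1 q = Some \<alpha> \<and> P 2 r = Some \<alpha> \<and>
        latin_line n (col_comp P q 1 p) \<and> latin_line n (col_comp P r 2 p))"

definition col_replaces_itself :: "nat \<Rightarrow> parr \<Rightarrow> nat \<Rightarrow> nat \<Rightarrow> bool" where
  "col_replaces_itself n P \<alpha> p \<longleftrightarrow> p \<in> {4..n} \<and>
     (\<exists>q\<in>{1..n}. \<exists>r\<in>{1..n}. P 1 q = Some \<alpha> \<and> P 2 r = Some \<alpha> \<and>
        latin_line n (col_comp P q 1 p) \<and> latin_line n (col_comp P r 2 p) \<and>
        p \<in> {q, r})"

definition reducible :: "nat \<Rightarrow> parr \<Rightarrow> bool" where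
  "reducible n P \<longleftrightarrow> (\<exists>\<alpha>\<in>{1..n}. not_in_corner P \<alpha> \<and>
      (\<exists>i. row_replaces n P \<alpha> i) \<and> (\<exists>p. col_replaces_itself n P \<alpha> p))"

text \<open>(1,2)-row-permutation: sigma(P(1,i)) = P(2,i).\<close>
definition rowperm :: "nat \<Rightarrow> parr \<Rightarrow> nat \<Rightarrow> nat" where
  "rowperm n P x = the (P 2 (THE i. i \<in> {1..n} \<and> P 1 i = Some x))"

definition cycle_of :: "nat \<Rightarrow> parr \<Rightarrow> nat \<Rightarrow> nat list" where
  "cycle_of n P a =
     (let m = (LEAST m. 0 < m \<and> (rowperm n P ^^ m) a = a)
      in map (\<lambda>k. (rowperm n P ^^ k) a) [0..<m])"

definition cycle_type :: "nat \<Rightarrow> parr \<Rightarrow> nat \<Rightarrow> nat list" where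
  "cycle_type n P a =
     map (\<lambda>x. if x \<in> {the (P 1 1), the (P 1 2), the (P 1 3)} then 1 else 0) (cycle_of n P a)"

definition allowed_types :: "nat list set" where
  "allowed_types = {[0,0], [0,1], [1,1], [1,0,1], [1,1,1], [1,0,1,0], [1,1,1,0],
                    [1,0,1,0,1], [1,0,1,0,1,0]}"

definition cyc_equiv :: "nat list \<Rightarrow> nat list \<Rightarrow> bool" where
  "cyc_equiv s t \<longleftrightarrow> (\<exists>k. rotate k s = t)"

text \<open>Every cycle of sigma (each cycle is the cycle through any of its elements a in 1..n).\<close>
definition completely_reduced :: "nat \<Rightarrow> parr \<Rightarrow> bool" where
  "completely_reduced n P \<longleftrightarrow>
     (\<forall>a\<in>{1..n}. \<exists>t\<in>allowed_types. cyc_equiv (cycle_type n P a) t)"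

end

theory Submission
  imports Defs "HOL-Combinatorics.Cycles"
begin

text \<open>
  Let \<open>\<sigma>\<close> be the (1,2)-row permutation and \<open>C\<close> the three symbols of row 1 in the corner, so that the
  corner symbols of row 2 are \<open>\<sigma> ` C\<close>. A symbol \<open>\<alpha>\<close> avoids the corner iff neither \<open>\<alpha>\<close> nor
  \<open>\<sigma>\<^sup>-\<^sup>1 \<alpha>\<close> lies in \<open>C\<close>. A row replacing such an \<open>\<alpha>\<close> always exists once \<open>n \<ge> 9\<close>: each of
  the three compositions rules out at most two of the \<open>n - 2\<close> lower rows. The two columns holding
  \<open>\<alpha>\<close> in rows 1 and 2 both compose to the column with entries \<open>\<sigma>\<^sup>-\<^sup>1 \<alpha>\<close> and \<open>\<sigma> \<alpha>\<close>, so
  a column replacing itself exists iff \<open>\<sigma> (\<sigma> \<alpha>) \<noteq> \<alpha>\<close>. Hence \<open>P\<close> is reducible iff some cycle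
  of \<open>\<sigma>\<close> of length at least 3 contains two consecutive symbols outside \<open>C\<close>.

  On the other side, a cycle type is a cyclic 0/1 word with at most three 1s. If it has length
  at least 3 and no two cyclically adjacent 0s, then every 0 is followed by a 1, so its length
  is at most 6, and a finite check shows it is equivalent to an allowed type; conversely no
  rotation of an allowed type of length at least 3 has two adjacent 0s.
\<close>

section \<open>Cyclic 0/1 words\<close>

definition cyclic_zero_free :: "nat list \<Rightarrow> bool" where
  "cyclic_zero_free t \<longleftrightarrow> (0, 0) \<notin> set (zip t (rotate1 t))"

lemma rotate1_zip: "length xs = length ys \<Longrightarrow> rotate1 (zip xs ys) = zip (rotate1 xs) (rotate1 ys)"
  by (cases xs; cases ys) auto

lemma cyclic_zero_free_rotate1: "cyclic_zero_free (rotate1 t) \<longleftrightarrow> cyclic_zero_free t"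
  unfolding cyclic_zero_free_def by (simp flip: rotate1_zip)

lemma cyclic_zero_free_rotate: "cyclic_zero_free (rotate k t) \<longleftrightarrow> cyclic_zero_free t"
  by (induction k) (simp_all add: cyclic_zero_free_rotate1)

lemma cyclic_zero_free_iff_nth:
  "cyclic_zero_free t \<longleftrightarrow> (\<forall>k<length t. t ! k = 0 \<longrightarrow> t ! (Suc k mod length t) \<noteq> 0)"
  unfolding cyclic_zero_free_def set_zip by (auto simp: nth_rotate1) (metis nth_rotate1 neq0_conv)

lemma count_list_rotate1: "count_list (rotate1 xs) x = count_list xs x"
  by (cases xs) simp_all

lemma count_list_eq_filter_zip_fst:
  "length xs = length ys \<Longrightarrow> count_list xs a = length (filter (\<lambda>(x, y). x = a) (zip xs ys))"
  by (induction xs ys rule: list_induct2) auto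

lemma count_list_eq_filter_zip_snd:
  "length xs = length ys \<Longrightarrow> count_list ys a = length (filter (\<lambda>(x, y). y = a) (zip xs ys))"
  by (induction xs ys rule: list_induct2) auto

lemma count_zero_le_count_one:
  assumes t01: "set t \<subseteq> {0, 1}" and "cyclic_zero_free t"
  shows "count_list t 0 \<le> count_list t 1"
proof -
  let ?zs = "zip t (rotate1 t)"
  have "\<forall>(x, y) \<in> set ?zs. x = 0 \<longrightarrow> y = 1"
    using \<open>cyclic_zero_free t\<close> t01 set_zip_rightD[of _ _ t "rotate1 t"]
    unfolding cyclic_zero_free_def by fastforce
  then have "filter (\<lambda>(x, y). x = 0) ?zs = filter (\<lambda>(x, y). x = 0) (filter (\<lambda>(x, y). y = 1) ?zs)"
    by (auto simp: filter_filter intro!: filter_cong)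
  then have "count_list t 0 = length (filter (\<lambda>(x, y). x = 0) (filter (\<lambda>(x, y). y = 1) ?zs))"
    using count_list_eq_filter_zip_fst[of t "rotate1 t"] by simp
  also have "\<dots> \<le> length (filter (\<lambda>(x, y). y = 1) ?zs)"
    by (rule length_filter_le)
  also have "\<dots> = count_list (rotate1 t) 1"
    using count_list_eq_filter_zip_snd[of t "rotate1 t"] by simp
  finally show ?thesis
    by (simp add: count_list_rotate1)
qed

lemma short_words_allowed:
  assumes "m \<in> {2, 3, 4, 5, 6}"
  shows "\<forall>u\<in>set (List.n_lists m [0, 1]). (m = 2 \<or> cyclic_zero_free u) \<longrightarrow> count_list u 1 \<le> 3 \<longrightarrow>
    (\<exists>k\<in>set [0..<m]. rotate k u \<in> allowed_types)"
  using assms by (elim insertE emptyE) (simp_all add: cyclic_zero_free_def allowed_types_def numeral_eq_Suc)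

lemma allowed_types_cyclic_zero_free: "s \<in> allowed_types \<Longrightarrow> length s = 2 \<or> cyclic_zero_free s"
  by (auto simp: cyclic_zero_free_def allowed_types_def)

lemma cyc_equiv_allowed_type_iff:
  assumes t01: "set t \<subseteq> {0, 1}" and len: "2 \<le> length t" and ones: "count_list t 1 \<le> 3"
  shows "(\<exists>s\<in>allowed_types. cyc_equiv t s) \<longleftrightarrow> length t = 2 \<or> cyclic_zero_free t"
proof
  assume "\<exists>s\<in>allowed_types. cyc_equiv t s"
  then obtain s k where "s \<in> allowed_types" "rotate k t = s"
    unfolding cyc_equiv_def by blast
  then show "length t = 2 \<or> cyclic_zero_free t"
    using allowed_types_cyclic_zero_free cyclic_zero_free_rotate by fastforce
next
  assume short: "length t = 2 \<or> cyclic_zero_free t"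
  have "length t \<le> 6"
  proof (cases "length t = 2")
    case False
    then have "count_list t 0 \<le> count_list t 1"
      using short count_zero_le_count_one t01 by blast
    moreover have "count_list t 0 + count_list t 1 = length t"
      using sum_count_set[OF t01] by simp
    ultimately show ?thesis using ones by linarith
  qed simp
  then have "length t \<in> {2, 3, 4, 5, 6}" using len by auto
  moreover have "t \<in> set (List.n_lists (length t) [0, 1])"
    using t01 by (simp add: set_n_lists)
  ultimately obtain k where "rotate k t \<in> allowed_types"
    using short_words_allowed short ones by blast
  then show "\<exists>s\<in>allowed_types. cyc_equiv t s"
    unfolding cyc_equiv_def by blast
qed

section \<open>Cycles of a permutation\<close>

lemma count_list_indicator_distinct:
  "distinct xs \<Longrightarrow> count_list (map (\<lambda>y. if y \<in> C then 1 else 0) xs) (1::nat) = card (set xs \<inter> C)"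
  by (induction xs) (auto simp: card_insert_if)

lemma least_power_eq_2_iff:
  assumes "permutation p" and "p x \<noteq> x"
  shows "least_power p x = 2 \<longleftrightarrow> p (p x) = x"
proof -
  have "least_power p x = 2 \<longleftrightarrow> least_power p x dvd 2"
    using least_power_gt_one[OF assms] by (auto dest: dvd_imp_le)
  also have "\<dots> \<longleftrightarrow> (p ^^ 2) x = x"
    by (rule least_power_dvd[OF assms(1)])
  finally show ?thesis by (simp add: numeral_2_eq_2)
qed

lemma funpow_mod_least_power:
  assumes "permutation p"
  shows "(p ^^ (k mod least_power p x)) x = (p ^^ k) x"
proof -
  let ?L = "least_power p x"
  have "(p ^^ (?L * (k div ?L))) x = x"
    using least_power_dvd[OF assms, of x "?L * (k div ?L)"] by simp
  then have "(p ^^ (k mod ?L + ?L * (k div ?L))) x = (p ^^ (k mod ?L)) x"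
    by (simp only: funpow_add comp_apply)
  then show ?thesis
    by (simp only: mod_mult_div_eq)
qed

lemma funpow_fixed_shift:
  assumes "inj p" and "(p ^^ j) ((p ^^ k) x) = (p ^^ k) x"
  shows "(p ^^ j) x = x"
proof -
  have "(p ^^ k) ((p ^^ j) x) = (p ^^ k) x"
    using assms(2) by (metis add.commute comp_apply funpow_add)
  then show ?thesis
    using inj_fn[OF assms(1)] by (simp add: inj_eq)
qed

lemma cyclic_zero_free_support_iff:
  assumes p: "permutation p"
  shows "cyclic_zero_free (map (\<lambda>y. if y \<in> C then 1 else 0) (support p x)) \<longleftrightarrow>
    (\<forall>k. (p ^^ k) x \<in> C \<or> (p ^^ Suc k) x \<in> C)"
proof -
  let ?L = "least_power p x"
  have L: "0 < ?L"
    using least_power_of_permutation(2)[OF p] .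
  have "cyclic_zero_free (map (\<lambda>y. if y \<in> C then 1 else 0) (support p x)) \<longleftrightarrow>
    (\<forall>k<?L. (p ^^ k) x \<in> C \<or> (p ^^ (Suc k mod ?L)) x \<in> C)"
    using L by (auto simp: cyclic_zero_free_iff_nth)
  also have "\<dots> \<longleftrightarrow> (\<forall>k<?L. (p ^^ k) x \<in> C \<or> (p ^^ Suc k) x \<in> C)"
    by (simp only: funpow_mod_least_power[OF p])
  also have "\<dots> \<longleftrightarrow> (\<forall>k. (p ^^ k) x \<in> C \<or> (p ^^ Suc k) x \<in> C)"
  proof (intro iffI allI)
    fix k
    assume "\<forall>k<?L. (p ^^ k) x \<in> C \<or> (p ^^ Suc k) x \<in> C"
    then have "(p ^^ (k mod ?L)) x \<in> C \<or> p ((p ^^ (k mod ?L)) x) \<in> C"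
      using L by simp
    then show "(p ^^ k) x \<in> C \<or> (p ^^ Suc k) x \<in> C"
      by (simp add: funpow_mod_least_power[OF p])
  qed simp
  finally show ?thesis .
qed

section \<open>Latin lines\<close>

lemma latin_line_surj:
  assumes "latin_line n f" and "\<forall>c\<in>{1..n}. \<exists>s\<in>{1..n}. f c = Some s" and "x \<in> {1..n}"
  shows "\<exists>c\<in>{1..n}. f c = Some x"
proof -
  have "inj_on (the \<circ> f) {1..n}"
  proof (rule inj_onI)
    fix a b assume "a \<in> {1..n}" "b \<in> {1..n}" "(the \<circ> f) a = (the \<circ> f) b"
    moreover obtain sa sb where "f a = Some sa" and "f b = Some sb"
      using assms(2) \<open>a \<in> {1..n}\<close> \<open>b \<in> {1..n}\<close> by blast
    ultimately have "f a = f b" and "f a \<noteq> None"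
      by simp_all
    then show "a = b"
      using assms(1) \<open>a \<in> {1..n}\<close> \<open>b \<in> {1..n}\<close> unfolding latin_line_def by blast
  qed
  moreover have "(the \<circ> f) ` {1..n} \<subseteq> {1..n}"
    using assms(2) by auto
  ultimately have "(the \<circ> f) ` {1..n} = {1..n}"
    by (intro endo_inj_surj) auto
  then obtain c where "c \<in> {1..n}" "x = the (f c)"
    using assms(3) by (metis comp_apply imageE)
  then show ?thesis
    using assms(2) by force
qed

lemma latin_line_two_entries:
  assumes "2 \<le> n" and "f 1 \<noteq> None" and "\<forall>a. a \<notin> {1, 2} \<longrightarrow> f a = None"
  shows "latin_line n f \<longleftrightarrow> f 1 \<noteq> f 2"
  unfolding latin_line_def
proof
  assume "\<forall>a\<in>{1..n}. \<forall>b\<in>{1..n}. a \<noteq> b \<longrightarrow> f a \<noteq> None \<longrightarrow> f a \<noteq> f b"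
  then show "f 1 \<noteq> f 2"
    using assms(1,2) by (simp add: Ball_def)
next
  assume "f 1 \<noteq> f 2"
  then show "\<forall>a\<in>{1..n}. \<forall>b\<in>{1..n}. a \<noteq> b \<longrightarrow> f a \<noteq> None \<longrightarrow> f a \<noteq> f b"
    using assms(3) by (metis insert_iff singletonD)
qed

section \<open>The row permutation of an array in PLS(2,3;n)\<close>

locale pls23 =
  fixes n :: nat and P :: parr
  assumes three_le: "3 \<le> n" and pls: "P \<in> PLS23 n"
begin

lemma entry_dom: "P i j \<noteq> None \<Longrightarrow> i \<in> {1..n} \<and> j \<in> {1..n}"
  using pls unfolding PLS23_def by blast

lemma entry_range: "P i j = Some s \<Longrightarrow> s \<in> {1..n}"
  using pls unfolding PLS23_def by blast

lemma entry_filled: "i \<in> {1..n} \<Longrightarrow> j \<in> {1..n} \<Longrightarrow> i \<le> 2 \<or> j \<le> 3 \<Longrightarrow> \<exists>s\<in>{1..n}. P i j = Some s"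
  using pls unfolding PLS23_def by blast

lemma entry_filled_iff: "i \<in> {1..n} \<Longrightarrow> j \<in> {1..n} \<Longrightarrow> P i j \<noteq> None \<longleftrightarrow> i \<le> 2 \<or> j \<le> 3"
  using pls unfolding PLS23_def by blast

lemma entry_empty:
  assumes "3 \<le> i" and "4 \<le> j"
  shows "P i j = None"
proof (rule ccontr)
  assume "P i j \<noteq> None"
  then have "i \<le> 2 \<or> j \<le> 3"
    using entry_dom entry_filled_iff by blast
  then show False
    using assms by linarith
qed

lemma lower_row_entry_cols: "3 \<le> i \<Longrightarrow> P i j \<noteq> None \<Longrightarrow> j \<in> {1, 2, 3}"
  using entry_dom[of i j] entry_empty[of i j] by (cases "4 \<le> j") auto

lemma right_col_entry_empty:
  assumes "i \<notin> {1, 2}" and "4 \<le> j"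
  shows "P i j = None"
proof (rule ccontr)
  assume "P i j \<noteq> None"
  then have "3 \<le> i"
    using entry_dom[of i j] assms(1) by auto
  then show False
    using entry_empty[OF _ assms(2)] \<open>P i j \<noteq> None\<close> by simp
qed

lemma row_latin: "i \<in> {1..n} \<Longrightarrow> latin_line n (row P i)"
  using pls unfolding PLS23_def by blast

lemma col_latin: "j \<in> {1..n} \<Longrightarrow> latin_line n (col P j)"
  using pls unfolding PLS23_def by blast

lemma row_inj: "P i a = P i b \<Longrightarrow> P i a \<noteq> None \<Longrightarrow> a = b"
  using row_latin entry_dom unfolding latin_line_def row_def by metis

lemma col_inj: "P a j = P b j \<Longrightarrow> P a j \<noteq> None \<Longrightarrow> a = b"
  using col_latin entry_dom unfolding latin_line_def col_def by metis

lemma row_surj: "i \<in> {1, 2} \<Longrightarrow> x \<in> {1..n} \<Longrightarrow> \<exists>c\<in>{1..n}. P i c = Some x"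
  using three_le row_latin[of i] entry_filled[of i]
  by (intro latin_line_surj[where f = "row P i", unfolded row_def]) (auto simp: row_def)

lemma col_surj: "j \<in> {1, 2, 3} \<Longrightarrow> x \<in> {1..n} \<Longrightarrow> \<exists>c\<in>{1..n}. P c j = Some x"
  using three_le col_latin[of j] entry_filled[of _ j]
  by (intro latin_line_surj[where f = "col P j", unfolded col_def]) (auto simp: col_def)

text \<open>\<open>rowperm n P\<close> is junk outside \<open>{1..n}\<close>; extending it by the identity yields a genuine
  permutation, so that the cycle theory of \<open>HOL-Combinatorics\<close> applies.\<close>

definition \<sigma> :: "nat \<Rightarrow> nat" where
  "\<sigma> x = (if x \<in> {1..n} then rowperm n P x else x)"

lemma row2_eq_\<sigma>:
  assumes "P 1 c = Some x"
  shows "P 2 c = Some (\<sigma> x)"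
proof -
  have c: "c \<in> {1..n}" and x: "x \<in> {1..n}"
    using assms entry_dom entry_range by blast+
  have "(THE i. i \<in> {1..n} \<and> P 1 i = Some x) = c"
  proof (rule the_equality)
    show "c \<in> {1..n} \<and> P 1 c = Some x"
      using c assms by simp
    show "i = c" if "i \<in> {1..n} \<and> P 1 i = Some x" for i
      using that assms row_inj by (metis option.distinct(1))
  qed
  moreover obtain y where "P 2 c = Some y"
    using entry_filled[of 2 c] c three_le by auto
  ultimately show ?thesis
    using x unfolding \<sigma>_def rowperm_def by simp
qed

lemma \<sigma>_permutes: "\<sigma> permutes {1..n}"
proof (rule bij_imp_permutes)
  have row1: "\<exists>c. P 1 c = Some x \<and> P 2 c = Some (\<sigma> x)" if "x \<in> {1..n}" for x
    using row_surj[of 1 x] that row2_eq_\<sigma> by blast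
  have "inj_on \<sigma> {1..n}"
  proof (rule inj_onI)
    fix x y assume "x \<in> {1..n}" "y \<in> {1..n}" "\<sigma> x = \<sigma> y"
    then show "x = y"
      using row1 row_inj by (metis option.distinct(1) option.inject)
  qed
  moreover have "\<sigma> ` {1..n} \<subseteq> {1..n}"
    using row1 entry_range by blast
  ultimately show "bij_betw \<sigma> {1..n} {1..n}"
    by (simp add: bij_betw_def endo_inj_surj)
qed (auto simp: \<sigma>_def)

lemma permutation_\<sigma>: "permutation \<sigma>"
  using permutes_imp_permutation[OF finite_atLeastAtMost \<sigma>_permutes] .

lemma \<sigma>_inj: "inj \<sigma>"
  using permutes_inj[OF \<sigma>_permutes] .

lemma \<sigma>_eq_rowperm: "x \<in> {1..n} \<Longrightarrow> \<sigma> x = rowperm n P x"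
  by (simp add: \<sigma>_def)

lemma funpow_\<sigma>_in: "a \<in> {1..n} \<Longrightarrow> (\<sigma> ^^ k) a \<in> {1..n}"
  using permutes_in_image[OF permutes_funpow[OF \<sigma>_permutes]] by blast

lemma \<sigma>_no_fixpoint:
  assumes "x \<in> {1..n}"
  shows "\<sigma> x \<noteq> x"
proof
  assume "\<sigma> x = x"
  obtain c where "P 1 c = Some x"
    using row_surj[of 1 x] assms by auto
  moreover from this have "P 2 c = Some x"
    using row2_eq_\<sigma> \<open>\<sigma> x = x\<close> by simp
  ultimately show False
    using col_inj[of 1 c 2] by simp
qed

section \<open>Reductions\<close>

lemma not_in_corner_col:
  assumes "not_in_corner P \<alpha>" and "P i j = Some \<alpha>" and "i \<in> {1, 2}"
  shows "j \<in> {4..n}"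
proof -
  have "j \<in> {1..n}"
    using assms(2) entry_dom by blast
  moreover have "j \<notin> {1, 2, 3}"
    using assms unfolding not_in_corner_def by blast
  ultimately show ?thesis
    by auto
qed

lemma not_in_corner_row:
  assumes "not_in_corner P \<alpha>" and "P i j = Some \<alpha>" and "j \<in> {1, 2, 3}"
  shows "i \<in> {3..n}"
proof -
  have "i \<in> {1..n}"
    using assms(2) entry_dom by blast
  moreover have "i \<notin> {1, 2}"
    using assms unfolding not_in_corner_def by blast
  ultimately show ?thesis
    by auto
qed

abbreviation corner :: "nat set" where
  "corner \<equiv> {the (P 1 1), the (P 1 2), the (P 1 3)}"

lemma not_in_corner_\<sigma>_iff: "not_in_corner P (\<sigma> x) \<longleftrightarrow> x \<notin> corner \<and> \<sigma> x \<notin> corner"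
proof -
  obtain c1 c2 c3 where c: "P 1 1 = Some c1" "P 1 2 = Some c2" "P 1 3 = Some c3"
    using entry_filled_iff[of 1] three_le by fastforce
  then show ?thesis
    using row2_eq_\<sigma>[OF c(1)] row2_eq_\<sigma>[OF c(2)] row2_eq_\<sigma>[OF c(3)]
    unfolding not_in_corner_def by (auto simp: inj_eq[OF \<sigma>_inj])
qed

lemma latin_row_comp:
  assumes j: "j \<in> {3..n}" and l: "l \<in> {1, 2, 3}"
    and distinct: "\<forall>l'\<in>{1, 2, 3}. l' \<noteq> l \<longrightarrow> P i l \<noteq> P j l'"
  shows "latin_line n (row_comp P j l i)"
  unfolding latin_line_def row_comp_def row_def
proof (intro ballI impI)
  fix a b assume "a \<noteq> b" and a: "((\<lambda>c. P j c)(l := P i l)) a \<noteq> None"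
  have cols: "P j c \<noteq> None \<Longrightarrow> c \<in> {1, 2, 3}" for c
    using j lower_row_entry_cols[of j c] by simp
  show "((\<lambda>c. P j c)(l := P i l)) a \<noteq> ((\<lambda>c. P j c)(l := P i l)) b"
  proof (cases "a = l")
    case True
    then show ?thesis
      using \<open>a \<noteq> b\<close> a distinct cols[of b] by auto
  next
    case False
    then have "a \<in> {1, 2, 3}" and "P j a \<noteq> None"
      using a cols by auto
    then show ?thesis
      using False \<open>a \<noteq> b\<close> distinct row_inj[of j a b] by (cases "b = l") auto
  qed
qed

lemma card_col_preimage_le:
  assumes "None \<notin> V" and "finite V"
  shows "card {i \<in> {1..n}. P i l \<in> V} \<le> card V"
proof (rule card_inj_on_le[where f = "\<lambda>i. P i l"])
  show "inj_on (\<lambda>i. P i l) {i \<in> {1..n}. P i l \<in> V}"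
    using assms(1) col_inj by (metis (mono_tags, lifting) inj_onI mem_Collect_eq)
qed (use assms in auto)

lemma card_conflicting_rows_le:
  assumes "j \<in> {3..n}" and "l \<in> {1, 2, 3}"
  shows "card {i \<in> {1..n}. P i l \<in> (\<lambda>l'. P j l') ` ({1, 2, 3} - {l})} \<le> 2"
proof -
  have "P j l' \<noteq> None" if "l' \<in> {1, 2, 3}" for l'
    using entry_filled[of j l'] assms(1) that three_le by auto
  then have "None \<notin> (\<lambda>l'. P j l') ` ({1, 2, 3} - {l})"
    by fastforce
  then have "card {i \<in> {1..n}. P i l \<in> (\<lambda>l'. P j l') ` ({1, 2, 3} - {l})}
      \<le> card ((\<lambda>l'. P j l') ` ({1, 2, 3} - {l}))"
    by (intro card_col_preimage_le) auto
  also have "\<dots> \<le> card ({1, 2, 3} - {l :: nat})"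
    by (rule card_image_le) simp
  also have "\<dots> = 2"
    using assms(2) by auto
  finally show ?thesis .
qed

lemma ex_row_replaces:
  assumes "9 \<le> n" and "\<alpha> \<in> {1..n}" and "not_in_corner P \<alpha>"
  shows "\<exists>i. row_replaces n P \<alpha> i"
proof -
  have "\<forall>l\<in>{1, 2, 3}. \<exists>r. P r l = Some \<alpha>"
    using col_surj assms(2) by blast
  then obtain r where r: "\<And>l. l \<in> {1, 2, 3} \<Longrightarrow> P (r l) l = Some \<alpha>"
    by metis
  have r3: "r l \<in> {3..n}" if "l \<in> {1, 2, 3}" for l
    using not_in_corner_row[OF assms(3) r[OF that] that] .
  txt \<open>Row \<open>i\<close> fails for column \<open>l\<close> only if \<open>P i l\<close> repeats one of the other two corner
    entries of row \<open>r l\<close>.\<close>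
  define bad where "bad l = {i \<in> {1..n}. P i l \<in> (\<lambda>l'. P (r l) l') ` ({1, 2, 3} - {l})}" for l
  have bad_card: "card (bad l) \<le> 2" if "l \<in> {1, 2, 3}" for l
    unfolding bad_def using card_conflicting_rows_le[OF r3[OF that] that] .
  have "card (\<Union>l\<in>{1, 2, 3}. bad l) \<le> card (bad 1) + card (bad 2) + card (bad 3)"
    using card_UN_le[of "{1, 2, 3 :: nat}" bad] by simp
  also have "\<dots> \<le> 6"
    using bad_card[of 1] bad_card[of 2] bad_card[of 3] by simp
  also have "\<dots> < card {3..n}"
    using assms(1) by simp
  finally have "\<not> {3..n} \<subseteq> (\<Union>l\<in>{1, 2, 3}. bad l)"
    using card_mono[of "\<Union>l\<in>{1, 2, 3}. bad l" "{3..n}"] by (auto simp: bad_def)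
  then obtain i where i: "i \<in> {3..n}" "i \<notin> (\<Union>l\<in>{1, 2, 3}. bad l)"
    by blast
  have latin: "latin_line n (row_comp P (r l) l i)" if "l \<in> {1, 2, 3}" for l
  proof (rule latin_row_comp[OF r3[OF that] that])
    have "P i l \<notin> (\<lambda>l'. P (r l) l') ` ({1, 2, 3} - {l})"
      using i that unfolding bad_def by auto
    then show "\<forall>l'\<in>{1, 2, 3}. l' \<noteq> l \<longrightarrow> P i l \<noteq> P (r l) l'"
      by blast
  qed
  have "r l \<in> {1..n} \<and> P (r l) l = Some \<alpha> \<and> latin_line n (row_comp P (r l) l i)"
    if "l \<in> {1, 2, 3}" for l
    using r3[OF that] r[OF that] latin[OF that] by auto
  from this[of 1] this[of 2] this[of 3] have "row_replaces n P \<alpha> i"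
    unfolding row_replaces_def using i(1) by blast
  then show ?thesis ..
qed

lemma col_comp_swap: "4 \<le> q \<Longrightarrow> 4 \<le> r \<Longrightarrow> col_comp P q 1 r = col_comp P r 2 q"
  unfolding col_comp_def col_def by (auto simp: right_col_entry_empty)

lemma latin_col_comp_iff:
  assumes "q \<in> {4..n}" and "r \<in> {4..n}"
  shows "latin_line n (col_comp P r 2 q) \<longleftrightarrow> P 1 r \<noteq> P 2 q"
proof -
  have "latin_line n (col_comp P r 2 q) \<longleftrightarrow> col_comp P r 2 q 1 \<noteq> col_comp P r 2 q 2"
  proof (rule latin_line_two_entries)
    show "2 \<le> n"
      using three_le by simp
    show "col_comp P r 2 q 1 \<noteq> None"
      using entry_filled[of 1 r] assms(2) by (auto simp: col_comp_def col_def)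
    show "\<forall>a. a \<notin> {1, 2} \<longrightarrow> col_comp P r 2 q a = None"
      using assms(2) by (simp add: col_comp_def col_def right_col_entry_empty)
  qed
  then show ?thesis
    by (simp add: col_comp_def col_def)
qed

lemma col_replaces_itself_iff:
  assumes q: "P 1 q = Some \<alpha>" and r: "P 2 r = Some \<alpha>" and qr: "q \<in> {4..n}" "r \<in> {4..n}"
  shows "col_replaces_itself n P \<alpha> p \<longleftrightarrow> p \<in> {q, r} \<and> P 1 r \<noteq> P 2 q"
proof -
  have q_unique: "P 1 q' = Some \<alpha> \<Longrightarrow> q' = q" for q'
    using q row_inj by (metis option.distinct(1))
  have r_unique: "P 2 r' = Some \<alpha> \<Longrightarrow> r' = r" for r'
    using r row_inj by (metis option.distinct(1))
  have "col_replaces_itself n P \<alpha> p \<longleftrightarrow>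
    p \<in> {q, r} \<and> latin_line n (col_comp P q 1 p) \<and> latin_line n (col_comp P r 2 p)"
  proof
    assume "col_replaces_itself n P \<alpha> p"
    then obtain q' r' where "P 1 q' = Some \<alpha>" "P 2 r' = Some \<alpha>" "p \<in> {q', r'}"
      "latin_line n (col_comp P q' 1 p)" "latin_line n (col_comp P r' 2 p)"
      unfolding col_replaces_itself_def by blast
    then show "p \<in> {q, r} \<and> latin_line n (col_comp P q 1 p) \<and> latin_line n (col_comp P r 2 p)"
      using q_unique r_unique by blast
  next
    assume "p \<in> {q, r} \<and> latin_line n (col_comp P q 1 p) \<and> latin_line n (col_comp P r 2 p)"
    moreover have "q \<in> {1..n}" and "r \<in> {1..n}" and "p \<in> {4..n}"
      using qr calculation by auto
    ultimately show "col_replaces_itself n P \<alpha> p"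
      unfolding col_replaces_itself_def using q r by blast
  qed
  also have "\<dots> \<longleftrightarrow> p \<in> {q, r} \<and> P 1 r \<noteq> P 2 q"
  proof -
    have "col_comp P c l c = col P c" for c l
      unfolding col_comp_def col_def by auto
    then show ?thesis
      using latin_col_comp_iff[OF qr] col_comp_swap col_latin qr by auto
  qed
  finally show ?thesis .
qed

lemma ex_col_replaces_itself_iff:
  assumes "\<alpha> \<in> {1..n}" and "not_in_corner P \<alpha>"
  shows "(\<exists>p. col_replaces_itself n P \<alpha> p) \<longleftrightarrow> \<sigma> (\<sigma> \<alpha>) \<noteq> \<alpha>"
proof -
  obtain q where q: "P 1 q = Some \<alpha>"
    using row_surj[of 1] assms(1) by blast
  obtain r where r: "P 2 r = Some \<alpha>"
    using row_surj[of 2] assms(1) by blast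
  have qr: "q \<in> {4..n}" "r \<in> {4..n}"
    using not_in_corner_col[OF assms(2)] q r by auto
  obtain \<beta> where \<beta>: "P 1 r = Some \<beta>"
    using entry_filled[of 1 r] qr by auto
  have "\<sigma> \<beta> = \<alpha>"
    using row2_eq_\<sigma>[OF \<beta>] r by simp
  moreover have "P 2 q = Some (\<sigma> \<alpha>)"
    using row2_eq_\<sigma>[OF q] .
  ultimately have "P 1 r \<noteq> P 2 q \<longleftrightarrow> \<sigma> (\<sigma> \<alpha>) \<noteq> \<alpha>"
    using \<beta> by (auto simp: inj_eq[OF \<sigma>_inj])
  then show ?thesis
    using col_replaces_itself_iff[OF q r qr] by blast
qed

lemma reducible_iff:
  assumes "9 \<le> n"
  shows "reducible n P \<longleftrightarrow> (\<exists>x\<in>{1..n}. x \<notin> corner \<and> \<sigma> x \<notin> corner \<and> \<sigma> (\<sigma> x) \<noteq> x)"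
proof -
  have "reducible n P \<longleftrightarrow> (\<exists>\<alpha>\<in>{1..n}. not_in_corner P \<alpha> \<and> \<sigma> (\<sigma> \<alpha>) \<noteq> \<alpha>)"
    unfolding reducible_def using ex_row_replaces[OF assms] ex_col_replaces_itself_iff by blast
  also have "\<dots> \<longleftrightarrow> (\<exists>\<alpha>\<in>\<sigma> ` {1..n}. not_in_corner P \<alpha> \<and> \<sigma> (\<sigma> \<alpha>) \<noteq> \<alpha>)"
    by (simp only: permutes_image[OF \<sigma>_permutes])
  also have "\<dots> \<longleftrightarrow> (\<exists>x\<in>{1..n}. x \<notin> corner \<and> \<sigma> x \<notin> corner \<and> \<sigma> (\<sigma> x) \<noteq> x)"
    by (simp add: not_in_corner_\<sigma>_iff inj_eq[OF \<sigma>_inj])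
  finally show ?thesis .
qed

section \<open>Cycle types\<close>

lemma funpow_rowperm:
  assumes "a \<in> {1..n}"
  shows "(rowperm n P ^^ k) a = (\<sigma> ^^ k) a"
proof (induction k)
  case (Suc k)
  then show ?case
    using funpow_\<sigma>_in[OF assms, of k] by (simp add: \<sigma>_eq_rowperm)
qed simp

lemma cycle_type_eq_support:
  "a \<in> {1..n} \<Longrightarrow> cycle_type n P a = map (\<lambda>y. if y \<in> corner then 1 else 0) (support \<sigma> a)"
  unfolding cycle_type_def cycle_of_def least_power_def by (simp add: funpow_rowperm conj_commute)

lemma cycle_type_allowed_iff:
  assumes a: "a \<in> {1..n}"
  shows "(\<exists>s\<in>allowed_types. cyc_equiv (cycle_type n P a) s) \<longleftrightarrow>
    \<sigma> (\<sigma> a) = a \<or> (\<forall>k. (\<sigma> ^^ k) a \<in> corner \<or> (\<sigma> ^^ Suc k) a \<in> corner)"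
proof -
  let ?t = "cycle_type n P a"
  have len: "length ?t = least_power \<sigma> a"
    by (simp add: cycle_type_eq_support[OF a])
  have "set ?t \<subseteq> {0, 1}"
    by (auto simp: cycle_type_eq_support[OF a])
  moreover have "2 \<le> length ?t"
    using least_power_gt_one[OF permutation_\<sigma> \<sigma>_no_fixpoint[OF a]] len by simp
  moreover have "count_list ?t 1 \<le> 3"
  proof -
    have "count_list ?t 1 = card (set (support \<sigma> a) \<inter> corner)"
      unfolding cycle_type_eq_support[OF a]
      by (rule count_list_indicator_distinct[OF cycle_of_permutation[OF permutation_\<sigma>]])
    also have "\<dots> \<le> card corner"
      by (intro card_mono) auto
    also have "\<dots> \<le> 3"
      using card_length[of "[the (P 1 1), the (P 1 2), the (P 1 3)]"] by simp
    finally show ?thesis .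
  qed
  ultimately have "(\<exists>s\<in>allowed_types. cyc_equiv ?t s) \<longleftrightarrow> length ?t = 2 \<or> cyclic_zero_free ?t"
    by (rule cyc_equiv_allowed_type_iff)
  moreover have "length ?t = 2 \<longleftrightarrow> \<sigma> (\<sigma> a) = a"
    using len least_power_eq_2_iff[OF permutation_\<sigma> \<sigma>_no_fixpoint[OF a]] by simp
  moreover have "cyclic_zero_free ?t \<longleftrightarrow> (\<forall>k. (\<sigma> ^^ k) a \<in> corner \<or> (\<sigma> ^^ Suc k) a \<in> corner)"
    unfolding cycle_type_eq_support[OF a] by (rule cyclic_zero_free_support_iff[OF permutation_\<sigma>])
  ultimately show ?thesis
    by blast
qed

lemma completely_reduced_iff:
  "completely_reduced n P \<longleftrightarrow> \<not> (\<exists>x\<in>{1..n}. x \<notin> corner \<and> \<sigma> x \<notin> corner \<and> \<sigma> (\<sigma> x) \<noteq> x)"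
proof -
  have "completely_reduced n P \<longleftrightarrow>
    (\<forall>a\<in>{1..n}. \<sigma> (\<sigma> a) = a \<or> (\<forall>k. (\<sigma> ^^ k) a \<in> corner \<or> (\<sigma> ^^ Suc k) a \<in> corner))"
    unfolding completely_reduced_def using cycle_type_allowed_iff by blast
  also have "\<dots> \<longleftrightarrow> \<not> (\<exists>x\<in>{1..n}. x \<notin> corner \<and> \<sigma> x \<notin> corner \<and> \<sigma> (\<sigma> x) \<noteq> x)"
  proof
    assume all: "\<forall>a\<in>{1..n}. \<sigma> (\<sigma> a) = a \<or> (\<forall>k. (\<sigma> ^^ k) a \<in> corner \<or> (\<sigma> ^^ Suc k) a \<in> corner)"
    show "\<not> (\<exists>x\<in>{1..n}. x \<notin> corner \<and> \<sigma> x \<notin> corner \<and> \<sigma> (\<sigma> x) \<noteq> x)"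
    proof
      assume "\<exists>x\<in>{1..n}. x \<notin> corner \<and> \<sigma> x \<notin> corner \<and> \<sigma> (\<sigma> x) \<noteq> x"
      then obtain x where x: "x \<in> {1..n}" "x \<notin> corner" "\<sigma> x \<notin> corner" "\<sigma> (\<sigma> x) \<noteq> x"
        by blast
      then have "(\<sigma> ^^ 0) x \<in> corner \<or> (\<sigma> ^^ Suc 0) x \<in> corner"
        using all by blast
      then show False
        using x by simp
    qed
  next
    assume none: "\<not> (\<exists>x\<in>{1..n}. x \<notin> corner \<and> \<sigma> x \<notin> corner \<and> \<sigma> (\<sigma> x) \<noteq> x)"
    show "\<forall>a\<in>{1..n}. \<sigma> (\<sigma> a) = a \<or> (\<forall>k. (\<sigma> ^^ k) a \<in> corner \<or> (\<sigma> ^^ Suc k) a \<in> corner)"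
    proof
      fix a assume a: "a \<in> {1..n}"
      have "(\<sigma> ^^ k) a \<in> corner \<or> (\<sigma> ^^ Suc k) a \<in> corner" if "\<sigma> (\<sigma> a) \<noteq> a" for k
      proof -
        have "(\<sigma> ^^ k) a \<in> {1..n}"
          using funpow_\<sigma>_in[OF a] .
        moreover have "\<sigma> (\<sigma> ((\<sigma> ^^ k) a)) \<noteq> (\<sigma> ^^ k) a"
          using funpow_fixed_shift[OF \<sigma>_inj, of 2 k a] that by (auto simp: numeral_2_eq_2)
        ultimately show ?thesis
          using none by auto
      qed
      then show "\<sigma> (\<sigma> a) = a \<or> (\<forall>k. (\<sigma> ^^ k) a \<in> corner \<or> (\<sigma> ^^ Suc k) a \<in> corner)"
        by blast
    qed
  qed
  finally show ?thesis .
qed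

end

theorem theorem6:
  fixes n :: nat and P :: parr
  assumes "n \<ge> 9" and "P \<in> PLS23 n"
  shows "reducible n P \<longleftrightarrow> \<not> completely_reduced n P"
proof -
  interpret pls23 n P
    using assms by unfold_locales simp_all
  show ?thesis
    using reducible_iff[OF assms(1)] completely_reduced_iff by blast
qed

end
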